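(* Let $f:\mathcal{X}\to\mathbb{R}$, $\tau\in\mathbb{R}$, and let $\mathbf{x}=[x_1,\dots,x_p]$ be an input with $f(\mathbf{x})\ge\tau$ and $f(\mathbf{x}_{\varnothing})<\tau$. Let $S_1,\dots,S_K$ be the output of $\mathrm{SIScollection}(f,\mathbf{x},\tau)$. Then: (i) for every $k\in\{1,\dots,K\}$ and every $i\in S_k$, $f(\mathbf{x}_{S_k\setminus\{i\}})<\tau$; (ii) for every $k$, let $T_k\subseteq[p]$ be the set passed to $\mathrm{BackSelect}$ in the call that produced $S_k$, and let $T_k=U^{(k)}_{m}\supsetneq U^{(k)}_{m-1}\supsetneq\cdots\supsetneq U^{(k)}_0=\varnothing$ ($m=|T_k|$) be the successive values taken by the variable $S$ during that run of $\mathrm{BackSelect}$. Then $S_k$ is one of the sets $U^{(k)}_j$, it satisfies $f(\mathbf{x}_{S_k})\ge\tau$, and every $U^{(k)}_j$ with $f(\mathbf{x}_{U^{(k)}_j})\ge\tau$ satisfies $|U^{(k)}_j|\ge|S_k|$.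
   Context: Each input $\mathbf{x}\in\mathcal{X}$ has indexable features $\mathbf{x}=[x_1,\dots,x_p]$ with $x_i\in\mathbb{R}^{d_i}$. A fixed mask value $z_i$ is given for each feature $i$ (e.g. the mean of feature $i$). For $S\subseteq[p]=\{1,\dots,p\}$, $\mathbf{x}_S$ denotes the input whose $i$-th feature equals $x_i$ if $i\in S$ and $z_i$ if $i\notin S$ (so $\mathbf{x}_{[p]}=\mathbf{x}$, $\mathbf{x}_\varnothing=\mathbf{z}$). Algorithms (argmax ties are broken by any fixed rule): BackSelect$(f,\mathbf{x},S)$: let $R$ be an empty stack; while $S\neq\varnothing$: let $i^*=\arg\max_{i\in S} f(\mathbf{x}_{S\setminus\{i\}})$, set $S\leftarrow S\setminus\{i^*\}$, push $i^*$ onto $R$; return $R$. FindSIS$(f,\mathbf{x},\tau,R)$: let $S=\varnothing$; while $f(\mathbf{x}_S)<\tau$: pop $i$ from the top of $R$ and set $S\leftarrow S\cup\{i\}$; if $f(\mathbf{x}_S)\ge\tau$ return $S$, else return None. SIScollection$(f,\mathbf{x},\tau)$: let $S=[p]$; for $k=1,2,\dots$: $R=\mathrm{BackSelect}(f,\mathbf{x},S)$; $S_k=\mathrm{FindSIS}(f,\mathbf{x},\tau,R)$; $S\leftarrow S\setminus S_k$; if $f(\mathbf{x}_S)<\tau$, return $S_1,\dots,S_k$. *)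

theory Defs
  imports Complex_Main
begin

text \<open>Features are indexed by a finite type 'i (playing the role of [p]); feature values
  live in an arbitrary type 'v. An input is a map 'i => 'v; z is the fixed masked.\<close>

definition masked :: "('i \<Rightarrow> 'v) \<Rightarrow> ('i \<Rightarrow> 'v) \<Rightarrow> 'i set \<Rightarrow> ('i \<Rightarrow> 'v)" where
  "masked x z S = (\<lambda>i. if i \<in> S then x i else z i)"

definition argmax_set :: "(('i \<Rightarrow> 'v) \<Rightarrow> real) \<Rightarrow> ('i \<Rightarrow> 'v) \<Rightarrow> ('i \<Rightarrow> 'v) \<Rightarrow> 'i set \<Rightarrow> 'i set" where
  "argmax_set f x z S = {i \<in> S. \<forall>j\<in>S. f (masked x z (S - {j})) \<le> f (masked x z (S - {i}))}"

text \<open>BackSelect with a fixed tie-breaking rule tb (given the current S and the set of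
  maximisers, it returns the chosen index). Returns the indices in removal order
  (fuel argument = number of iterations).\<close>
primrec backselect_aux ::
  "(('i \<Rightarrow> 'v) \<Rightarrow> real) \<Rightarrow> ('i \<Rightarrow> 'v) \<Rightarrow> ('i \<Rightarrow> 'v) \<Rightarrow> ('i set \<Rightarrow> 'i set \<Rightarrow> 'i)
    \<Rightarrow> nat \<Rightarrow> 'i set \<Rightarrow> 'i list" where
  "backselect_aux f x z tb 0 S = []"
| "backselect_aux f x z tb (Suc n) S =
     (if S = {} then []
      else (let i = tb S (argmax_set f x z S) in i # backselect_aux f x z tb n (S - {i})))"

definition backselect_removed where
  "backselect_removed f x z tb S = backselect_aux f x z tb (card S) S"

text \<open>The returned stack R, top of the stack first (last pushed = last removed).\<close>
definition BackSelect where
  "BackSelect f x z tb S = rev (backselect_removed f x z tb S)"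

text \<open>Value of the variable S after t iterations of the while loop of BackSelect started at T.\<close>
definition backselect_state where
  "backselect_state f x z tb T t = T - set (take t (backselect_removed f x z tb T))"

primrec findsis_aux ::
  "(('i \<Rightarrow> 'v) \<Rightarrow> real) \<Rightarrow> ('i \<Rightarrow> 'v) \<Rightarrow> ('i \<Rightarrow> 'v) \<Rightarrow> real \<Rightarrow> 'i set \<Rightarrow> 'i list \<Rightarrow> 'i set option" where
  "findsis_aux f x z \<tau> S [] = (if f (masked x z S) \<ge> \<tau> then Some S else None)"
| "findsis_aux f x z \<tau> S (i # R) =
     (if f (masked x z S) \<ge> \<tau> then Some S else findsis_aux f x z \<tau> (insert i S) R)"

definition FindSIS where
  "FindSIS f x z \<tau> R = findsis_aux f x z \<tau> {} R"

text \<open>SIScollection, recording for each round k the pair (T_k, S_k), where T_k is the set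
  passed to BackSelect and S_k the set returned by FindSIS (fuel = number of rounds).\<close>
primrec sis_aux ::
  "(('i \<Rightarrow> 'v) \<Rightarrow> real) \<Rightarrow> ('i \<Rightarrow> 'v) \<Rightarrow> ('i \<Rightarrow> 'v) \<Rightarrow> ('i set \<Rightarrow> 'i set \<Rightarrow> 'i) \<Rightarrow> real
    \<Rightarrow> nat \<Rightarrow> 'i set \<Rightarrow> ('i set \<times> 'i set) list" where
  "sis_aux f x z tb \<tau> 0 S = []"
| "sis_aux f x z tb \<tau> (Suc n) S =
     (case FindSIS f x z \<tau> (BackSelect f x z tb S) of
        None \<Rightarrow> []
      | Some Sk \<Rightarrow> (S, Sk) # (if f (masked x z (S - Sk)) < \<tau> then [] else sis_aux f x z tb \<tau> n (S - Sk)))"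

definition SIS_trace :: "(('i::finite \<Rightarrow> 'v) \<Rightarrow> real) \<Rightarrow> ('i \<Rightarrow> 'v) \<Rightarrow> ('i \<Rightarrow> 'v)
    \<Rightarrow> ('i set \<Rightarrow> 'i set \<Rightarrow> 'i) \<Rightarrow> real \<Rightarrow> ('i set \<times> 'i set) list" where
  "SIS_trace f x z tb \<tau> = sis_aux f x z tb \<tau> (Suc (card (UNIV :: 'i set))) UNIV"

definition SIScollection where
  "SIScollection f x z tb \<tau> = map snd (SIS_trace f x z tb \<tau>)"

end

theory Submission
  imports Defs
begin

text \<open>The stack R returned by BackSelect lists T in reverse order of removal, so the
  successive values of S during BackSelect are exactly the prefixes of R, the j-th prefix
  having j elements. FindSIS returns the shortest prefix S_k with f(x_S_k) \<ge> \<tau>, which gives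
  minimality. The top element a of S_k was removed greedily, i.e. removing it from S_k
  maximises f among all single removals; but S_k - {a} is the preceding, shorter prefix, so
  f is below \<tau> there, and hence after removing any element of S_k.\<close>

lemma argmax_set_nonempty:
  assumes "finite S" "S \<noteq> {}"
  shows "argmax_set f x z S \<noteq> {}"
proof -
  let ?g = "\<lambda>i. f (masked x z (S - {i}))"
  have "Max (?g ` S) \<in> ?g ` S"
    using assms by simp
  then obtain i where "i \<in> S" "?g i = Max (?g ` S)"
    by auto
  then have "i \<in> argmax_set f x z S"
    using assms unfolding argmax_set_def by simp
  then show ?thesis by blast
qed

lemma argmax_set_le:
  "a \<in> argmax_set f x z S \<Longrightarrow> i \<in> S \<Longrightarrow> f (masked x z (S - {i})) \<le> f (masked x z (S - {a}))"
  unfolding argmax_set_def by blast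

lemma findsis_aux_eq_SomeD:
  "findsis_aux f x z \<tau> S R = Some S' \<Longrightarrow>
    \<exists>j \<le> length R. S' = S \<union> set (take j R) \<and> f (masked x z S') \<ge> \<tau>
      \<and> (\<forall>j'<j. f (masked x z (S \<union> set (take j' R))) < \<tau>)"
proof (induction R arbitrary: S)
  case Nil
  then show ?case by (auto split: if_splits)
next
  case (Cons i R)
  show ?case
  proof (cases "f (masked x z S) \<ge> \<tau>")
    case True
    then show ?thesis using Cons.prems by (intro exI[of _ 0]) auto
  next
    case False
    then have "findsis_aux f x z \<tau> (insert i S) R = Some S'"
      using Cons.prems by simp
    from Cons.IH[OF this] obtain j where j: "j \<le> length R" "S' = insert i S \<union> set (take j R)"
      "f (masked x z S') \<ge> \<tau>" "\<forall>j'<j. f (masked x z (insert i S \<union> set (take j' R))) < \<tau>"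
      by blast
    show ?thesis
    proof (intro exI[of _ "Suc j"] conjI allI impI)
      show "Suc j \<le> length (i # R)" "S' = S \<union> set (take (Suc j) (i # R))"
        using j(1,2) by auto
      show "f (masked x z S') \<ge> \<tau>" using j(3) .
      fix j' assume "j' < Suc j"
      then show "f (masked x z (S \<union> set (take j' (i # R)))) < \<tau>"
        using j(4) False by (cases j') auto
    qed
  qed
qed

lemma FindSIS_eq_SomeD:
  "FindSIS f x z \<tau> R = Some S' \<Longrightarrow>
    \<exists>j \<le> length R. S' = set (take j R) \<and> f (masked x z S') \<ge> \<tau>
      \<and> (\<forall>j'<j. f (masked x z (set (take j' R))) < \<tau>)"
  unfolding FindSIS_def using findsis_aux_eq_SomeD[of f x z \<tau> "{}" R S'] by simp

context
  fixes tb :: "'i set \<Rightarrow> 'i set \<Rightarrow> 'i"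
  assumes tb: "\<And>S A. A \<noteq> {} \<Longrightarrow> tb S A \<in> A"
begin

lemma backselect_aux_spec:
  assumes "finite S" "card S = n"
  shows "distinct (backselect_aux f x z tb n S) \<and> set (backselect_aux f x z tb n S) = S
    \<and> (\<forall>t<n. backselect_aux f x z tb n S ! t
              \<in> argmax_set f x z (S - set (take t (backselect_aux f x z tb n S))))"
  using assms
proof (induction n arbitrary: S)
  case 0
  then show ?case by simp
next
  case (Suc n)
  then have "S \<noteq> {}" by auto
  define i where "i = tb S (argmax_set f x z S)"
  define L where "L = backselect_aux f x z tb n (S - {i})"
  have i: "i \<in> argmax_set f x z S"
    unfolding i_def by (rule tb[OF argmax_set_nonempty[OF Suc.prems(1) \<open>S \<noteq> {}\<close>]])
  then have "i \<in> S" unfolding argmax_set_def by blast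
  then have "finite (S - {i})" "card (S - {i}) = n"
    using Suc.prems by simp_all
  then have IH: "distinct L \<and> set L = S - {i}
      \<and> (\<forall>t<n. L ! t \<in> argmax_set f x z (S - {i} - set (take t L)))"
    unfolding L_def using Suc.IH by blast
  have unfold: "backselect_aux f x z tb (Suc n) S = i # L"
    using \<open>S \<noteq> {}\<close> by (simp add: i_def L_def Let_def)
  have "(i # L) ! t \<in> argmax_set f x z (S - set (take t (i # L)))" if "t < Suc n" for t
  proof (cases t)
    case (Suc t')
    then have "S - set (take t (i # L)) = S - {i} - set (take t' L)"
      by auto
    moreover have "L ! t' \<in> argmax_set f x z (S - {i} - set (take t' L))"
      using IH Suc that by simp
    ultimately show ?thesis
      using Suc by simp
  qed (use i in simp)
  moreover have "distinct (i # L)" "set (i # L) = S"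
    using IH \<open>i \<in> S\<close> by auto
  ultimately show ?case
    unfolding unfold by blast
qed

lemma distinct_BackSelect: "finite T \<Longrightarrow> distinct (BackSelect f x z tb T)"
  using backselect_aux_spec[of T "card T" f x z]
  unfolding BackSelect_def backselect_removed_def by simp

lemma set_BackSelect: "finite T \<Longrightarrow> set (BackSelect f x z tb T) = T"
  using backselect_aux_spec[of T "card T" f x z]
  unfolding BackSelect_def backselect_removed_def by simp

lemma length_BackSelect: "finite T \<Longrightarrow> length (BackSelect f x z tb T) = card T"
  using distinct_card[OF distinct_BackSelect] set_BackSelect by metis

lemma backselect_state_eq_take_BackSelect:
  assumes "finite T" "j \<le> card T"
  shows "backselect_state f x z tb T (card T - j) = set (take j (BackSelect f x z tb T))"
proof -
  define L where "L = backselect_removed f x z tb T"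
  have L: "distinct L" "set L = T" "length L = card T"
    using distinct_BackSelect[OF assms(1), of f x z] set_BackSelect[OF assms(1), of f x z]
      length_BackSelect[OF assms(1), of f x z]
    unfolding L_def BackSelect_def by simp_all
  let ?n = "card T - j"
  have "T = set (take ?n L) \<union> set (drop ?n L)"
    using L(2) append_take_drop_id[of ?n L] set_append by metis
  moreover have "set (take ?n L) \<inter> set (drop ?n L) = {}"
    using L(1) append_take_drop_id[of ?n L] distinct_append by metis
  ultimately have "T - set (take ?n L) = set (drop ?n L)"
    by blast
  also have "\<dots> = set (take j (rev L))"
    using L(3) assms(2) by (simp add: take_rev)
  finally show ?thesis
    unfolding backselect_state_def BackSelect_def L_def .
qed

lemma card_backselect_state:
  "finite T \<Longrightarrow> j \<le> card T \<Longrightarrow> card (backselect_state f x z tb T (card T - j)) = j"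
  using backselect_state_eq_take_BackSelect[of T j f x z] distinct_BackSelect[of T f x z]
    length_BackSelect[of T f x z]
  by (simp add: distinct_card)

lemma BackSelect_nth_in_argmax_set:
  assumes "finite T" "j < card T"
  shows "BackSelect f x z tb T ! j \<in> argmax_set f x z (set (take (Suc j) (BackSelect f x z tb T)))"
proof -
  define L where "L = backselect_removed f x z tb T"
  have "length L = card T"
    using length_BackSelect[OF assms(1), of f x z] unfolding L_def BackSelect_def by simp
  then have "BackSelect f x z tb T ! j = L ! (card T - Suc j)"
    using assms(2) unfolding L_def BackSelect_def by (simp add: rev_nth)
  moreover have "L ! (card T - Suc j) \<in> argmax_set f x z (T - set (take (card T - Suc j) L))"
    using backselect_aux_spec[OF assms(1) refl, of f x z] assms(2)
    unfolding L_def backselect_removed_def by simp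
  moreover have "T - set (take (card T - Suc j) L) = set (take (Suc j) (BackSelect f x z tb T))"
    using backselect_state_eq_take_BackSelect[OF assms(1), of "Suc j" f x z] assms(2)
    unfolding backselect_state_def L_def by simp
  ultimately show ?thesis by (simp only:)
qed

lemma FindSIS_BackSelect_minimal:
  fixes f :: "('i \<Rightarrow> 'v) \<Rightarrow> real"
  assumes fz: "f (masked x z {}) < \<tau>"
    and "finite T"
    and found: "FindSIS f x z \<tau> (BackSelect f x z tb T) = Some Sk"
  defines "U \<equiv> \<lambda>j. backselect_state f x z tb T (card T - j)"
  shows "(\<forall>i \<in> Sk. f (masked x z (Sk - {i})) < \<tau>)
       \<and> (\<exists>j \<le> card T. Sk = U j)
       \<and> f (masked x z Sk) \<ge> \<tau>
       \<and> (\<forall>j \<le> card T. f (masked x z (U j)) \<ge> \<tau> \<longrightarrow> card (U j) \<ge> card Sk)"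
proof -
  let ?R = "BackSelect f x z tb T"
  have R: "distinct ?R" "length ?R = card T"
    using \<open>finite T\<close> by (simp_all add: distinct_BackSelect length_BackSelect)
  have U_eq: "U j = set (take j ?R)" if "j \<le> card T" for j
    unfolding U_def using backselect_state_eq_take_BackSelect[OF \<open>finite T\<close> that] .
  have card_U: "card (U j) = j" if "j \<le> card T" for j
    unfolding U_def using card_backselect_state[OF \<open>finite T\<close> that] .
  obtain j where j: "j \<le> card T" "Sk = set (take j ?R)" "f (masked x z Sk) \<ge> \<tau>"
      and below: "\<forall>j'<j. f (masked x z (set (take j' ?R))) < \<tau>"
    using FindSIS_eq_SomeD[OF found] R(2) by metis
  have "j \<noteq> 0"
  proof
    assume "j = 0"
    then show False using j(2,3) fz by simp
  qed
  then obtain j0 where j0: "j = Suc j0" using not0_implies_Suc by blast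
  define a where "a = ?R ! j0"
  have prefix: "take j ?R = take j0 ?R @ [a]"
    unfolding j0 a_def using j(1) j0 R(2) by (simp add: take_Suc_conv_app_nth)
  have a_max: "a \<in> argmax_set f x z Sk"
    unfolding a_def j(2) j0 using BackSelect_nth_in_argmax_set[OF \<open>finite T\<close>, of j0 f x z] j(1) j0
    by simp
  have "distinct (take j0 ?R @ [a])"
    using distinct_take[OF R(1)] prefix by metis
  then have "Sk - {a} = set (take j0 ?R)"
    unfolding j(2) prefix by auto
  then have "f (masked x z (Sk - {a})) < \<tau>"
    using below j0 by simp
  then have "\<forall>i \<in> Sk. f (masked x z (Sk - {i})) < \<tau>"
    using argmax_set_le[OF a_max] by (meson le_less_trans)
  moreover have "card (U j') \<ge> card Sk" if "j' \<le> card T" "f (masked x z (U j')) \<ge> \<tau>" for j'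
  proof -
    have "\<not> j' < j" using below that U_eq by force
    then show ?thesis using card_U that j(1,2) U_eq by simp
  qed
  moreover have "Sk = U j"
    using U_eq j(1,2) by simp
  ultimately show ?thesis
    using j(1,3) by blast
qed

end

lemma sis_aux_FindSIS:
  "(T, Sk) \<in> set (sis_aux f x z tb \<tau> n S) \<Longrightarrow> FindSIS f x z \<tau> (BackSelect f x z tb T) = Some Sk"
  by (induction n arbitrary: S) (auto split: option.splits if_splits)

theorem proposition1:
  fixes f :: "('i::finite \<Rightarrow> 'v) \<Rightarrow> real" and x z :: "'i \<Rightarrow> 'v" and \<tau> :: real
    and tb :: "'i set \<Rightarrow> 'i set \<Rightarrow> 'i"
  assumes tb: "\<And>S A. A \<noteq> {} \<Longrightarrow> tb S A \<in> A"
    and fx: "f x \<ge> \<tau>"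
    and fz: "f (masked x z {}) < \<tau>"
  shows "\<forall>k < length (SIS_trace f x z tb \<tau>).
           (let T = fst (SIS_trace f x z tb \<tau> ! k);
                Sk = snd (SIS_trace f x z tb \<tau> ! k);
                m = card T;
                U = (\<lambda>j. backselect_state f x z tb T (m - j))
            in Sk = SIScollection f x z tb \<tau> ! k
             \<and> (\<forall>i \<in> Sk. f (masked x z (Sk - {i})) < \<tau>)
             \<and> (\<exists>j \<le> m. Sk = U j)
             \<and> f (masked x z Sk) \<ge> \<tau>
             \<and> (\<forall>j \<le> m. f (masked x z (U j)) \<ge> \<tau> \<longrightarrow> card (U j) \<ge> card Sk))"
  \<comment> \<open>f x \<ge> \<tau> only guarantees that the trace is nonempty; each round is correct without it.\<close>
  apply (intro allI impI)
  subgoal premises k for k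
  proof -
    obtain T Sk where round: "SIS_trace f x z tb \<tau> ! k = (T, Sk)"
      by fastforce
    then have "FindSIS f x z \<tau> (BackSelect f x z tb T) = Some Sk"
      using nth_mem[OF k] unfolding SIS_trace_def by (metis sis_aux_FindSIS)
    from FindSIS_BackSelect_minimal[OF tb fz finite this] show ?thesis
      using k round unfolding SIScollection_def Let_def by simp
  qed
  done

end
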